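(* Let $p, m$ be positive integers with $m \le p$, let $\eta > 0$, let $F_{\mathrm{new}}, F_{\mathrm{old}} \in \mathbb{R}^{p\times p}$ be symmetric positive definite matrices, let $g \in \mathbb{R}^p$, and let $G = [g_1,\ldots,g_m] \in \mathbb{R}^{p\times m}$ have full column rank. For $u, w \in \mathbb{R}^p$ write $\|w\|_{F_{\mathrm{new}}} = \sqrt{w^\top F_{\mathrm{new}} w}$. Consider the constrained problem $$\min_{u\in\mathbb{R}^p} \ \| g - F_{\mathrm{new}}^{-1} u\|_{F_{\mathrm{new}}}^2 \quad \text{subject to} \quad F_{\mathrm{old}}^{-1} u \in \operatorname{Col}(G),$$ let $u^*$ be a minimizer, and suppose $c>0$ is such that $v^* = c\,F_{\mathrm{new}}^{-1}(g-u^* )$ satisfies $\|v^*\|_{F_{\mathrm{new}}} = \eta$ (this $v^*$ is called the FOPNG update). Then $$v^* = \eta\,\frac{F_{\mathrm{new}}^{-1} P g}{\sqrt{g^\top P^\top F_{\mathrm{new}}^{-1} P g}},$$ where $$P = I - F_{\mathrm{old}} G\left(G^\top F_{\mathrm{old}} F_{\mathrm{new}}^{-1} F_{\mathrm{old}} G\right)^{-1} G^\top F_{\mathrm{old}}.$$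
   Context: In the paper's setting, $\theta\in\mathbb{R}^p$ are model parameters, $g$ is the gradient of the new-task loss, the columns of $G$ are stored gradients from previous tasks, and $F_{\mathrm{new}}$, $F_{\mathrm{old}}$ are Fisher information matrices $\mathbb{E}_{x}\mathbb{E}_{y\sim p_\theta(\cdot|x)}[\nabla_\theta \log p_\theta(y|x)\nabla_\theta \log p_\theta(y|x)^\top]$ computed on new-task and previous-task data respectively. The paper's regularity assumptions are: the score function exists with finite second moments, $F_{\mathrm{new}}$ is positive definite, and $G$ has full column rank. $\operatorname{Col}(G)$ denotes the column space of $G$. *)

theory Defs
  imports "HOL-Analysis.Analysis"
begin

definition spd :: "real^'n^'n \<Rightarrow> bool" where
  "spd F \<longleftrightarrow> transpose F = F \<and> (\<forall>x. x \<noteq> 0 \<longrightarrow> x \<bullet> (F *v x) > 0)"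

definition fnorm :: "real^'n^'n \<Rightarrow> real^'n \<Rightarrow> real" where
  "fnorm F w = sqrt (w \<bullet> (F *v w))"

definition colspace :: "real^'m^'p \<Rightarrow> (real^'p) set" where
  "colspace G = range (\<lambda>a. G *v a)"

end

theory Submission
  imports Defs
begin

(* Write B = Fold G and N = Fnew. The constraint says exactly that u lies in Col(B), and B is
   injective. For u0 = B (B^T N^-1 B)^-1 B^T g the residual w = g - N^-1 u0 satisfies the normal
   equation B^T w = 0, so for every feasible u Pythagoras gives
   |g - N^-1 u|_N^2 = |w|_N^2 + x^T N^-1 x  with  x = u - u0.
   Hence u0 is the unique minimiser and g - u* = P g. So v* is a positive multiple of N^-1 P g,
   and the factor is fixed by |v*|_N = eta together with |N^-1 P g|_N^2 = g^T P^T N^-1 P g. *)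

declare transpose_matrix_vector [simp del]

lemma matrix_inv_right: "invertible A \<Longrightarrow> A ** matrix_inv A = mat 1"
  and matrix_inv_left: "invertible A \<Longrightarrow> matrix_inv A ** A = mat 1"
  unfolding invertible_def matrix_inv_def by (metis (mono_tags, lifting) someI_ex)+

lemma matrix_inv_cancel:
  fixes A :: "'a::semiring_1^'n^'n"
  assumes "invertible A"
  shows "A *v (matrix_inv A *v x) = x" "matrix_inv A *v (A *v x) = x"
  by (simp_all add: matrix_vector_mul_assoc matrix_inv_right matrix_inv_left assms)

lemma inner_matrix_vector_transpose: "(x::real^'m) \<bullet> (A *v y) = (transpose A *v x) \<bullet> y"
  by (simp add: dot_lmul_matrix flip: vector_transpose_matrix[of x "transpose A"])

lemma spd_invertible:
  assumes "spd F" shows "invertible F"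
proof -
  have "F *v x = 0 \<Longrightarrow> x = 0" for x
    using assms unfolding spd_def by force
  then show ?thesis
    using matrix_left_invertible_ker invertible_left_inverse by blast
qed

lemma spd_matrix_inv:
  assumes "spd F" shows "spd (matrix_inv F)"
  unfolding spd_def
proof safe
  have "invertible F" "transpose F = F" using assms spd_invertible spd_def by auto
  then show "transpose (matrix_inv F) = matrix_inv F"
    by (metis matrix_inv_left matrix_inv_right matrix_mul_assoc matrix_mul_lid matrix_mul_rid
        matrix_transpose_mul transpose_mat)
  fix y :: "real^'a" assume "y \<noteq> 0"
  let ?z = "matrix_inv F *v y"
  have "F *v ?z = y"
    using matrix_inv_cancel \<open>invertible F\<close> by blast
  then show "y \<bullet> (matrix_inv F *v y) > 0"
    using assms \<open>y \<noteq> 0\<close> unfolding spd_def by (metis inner_commute matrix_vector_mult_0_right)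
qed

lemma spd_congruence:
  fixes B :: "real^'m^'n"
  assumes "spd F" "inj ((*v) B)"
  shows "spd (transpose B ** F ** B)"
  unfolding spd_def
proof safe
  show "transpose (transpose B ** F ** B) = transpose B ** F ** B"
    using assms(1) by (simp add: spd_def matrix_transpose_mul matrix_mul_assoc)
  fix x :: "real^'m" assume "x \<noteq> 0"
  then have "B *v x \<noteq> 0"
    using assms(2) by (metis injD matrix_vector_mult_0_right)
  then have "(B *v x) \<bullet> (F *v (B *v x)) > 0"
    using assms(1) spd_def by blast
  then show "x \<bullet> ((transpose B ** F ** B) *v x) > 0"
    by (simp add: inner_matrix_vector_transpose flip: matrix_vector_mul_assoc)
qed

lemma fnorm_scaleR: "fnorm F (c *\<^sub>R w) = \<bar>c\<bar> * fnorm F w"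
proof -
  have "(c *\<^sub>R w) \<bullet> (F *v (c *\<^sub>R w)) = c\<^sup>2 * (w \<bullet> (F *v w))"
    by (simp add: matrix_vector_mult_scaleR power2_eq_square)
  then show ?thesis
    by (simp add: fnorm_def real_sqrt_mult)
qed

lemma power2_fnorm: "spd F \<Longrightarrow> (fnorm F w)\<^sup>2 = w \<bullet> (F *v w)"
  unfolding fnorm_def spd_def by (metis inner_zero_left less_eq_real_def real_sqrt_pow2)

lemma fnorm_matrix_inv:
  "invertible F \<Longrightarrow> fnorm F (matrix_inv F *v r) = sqrt (r \<bullet> (matrix_inv F *v r))"
  by (simp add: fnorm_def matrix_inv_cancel inner_commute)

lemma power2_fnorm_diff_matrix_inv:
  assumes "spd N"
  shows "(fnorm N (w - matrix_inv N *v y))\<^sup>2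
           = (fnorm N w)\<^sup>2 - 2 * (y \<bullet> w) + y \<bullet> (matrix_inv N *v y)"
proof -
  have N: "invertible N" "transpose N = N"
    using assms spd_invertible spd_def by auto
  have "(matrix_inv N *v y) \<bullet> (N *v w) = y \<bullet> w"
    using N by (metis inner_matrix_vector_transpose inner_commute matrix_inv_cancel(1))
  then show ?thesis
    using N by (simp add: power2_fnorm[OF assms] matrix_vector_mult_diff_distrib
        inner_diff_left inner_diff_right matrix_inv_cancel inner_commute)
qed

lemma constrained_residual_minimizer:
  fixes N :: "real^'p^'p" and B :: "real^'m^'p"
  assumes "spd N" and "inj ((*v) B)"
    and "u \<in> colspace B"
    and "\<forall>v \<in> colspace B. (fnorm N (g - matrix_inv N *v u))\<^sup>2 \<le> (fnorm N (g - matrix_inv N *v v))\<^sup>2"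
  shows "u = B *v (matrix_inv (transpose B ** matrix_inv N ** B) *v (transpose B *v g))"
    (is "u = ?u\<^sub>0")
proof -
  let ?Ni = "matrix_inv N" and ?M = "transpose B ** matrix_inv N ** B"
  have "invertible ?M"
    using spd_invertible spd_congruence spd_matrix_inv assms(1,2) by blast
  define w where "w = g - ?Ni *v ?u\<^sub>0"
  have "transpose B *v (?Ni *v ?u\<^sub>0) = ?M *v (matrix_inv ?M *v (transpose B *v g))"
    by (simp add: matrix_vector_mul_assoc matrix_mul_assoc)
  then have normal_equation: "transpose B *v w = 0"
    by (simp add: w_def matrix_vector_mult_diff_distrib matrix_inv_cancel \<open>invertible ?M\<close>)
  obtain a where a: "u - ?u\<^sub>0 = B *v a"
    using assms(3) unfolding colspace_def by (metis matrix_vector_mult_diff_distrib rangeE)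
  have "(u - ?u\<^sub>0) \<bullet> w = 0"
    by (simp add: a inner_commute inner_matrix_vector_transpose normal_equation)
  moreover have "g - ?Ni *v u = w - ?Ni *v (u - ?u\<^sub>0)"
    by (simp add: w_def matrix_vector_mult_diff_distrib)
  moreover have "g - ?Ni *v ?u\<^sub>0 = w - ?Ni *v 0"
    by (simp add: w_def)
  moreover have "?u\<^sub>0 \<in> colspace B"
    by (simp add: colspace_def)
  ultimately have "(u - ?u\<^sub>0) \<bullet> (?Ni *v (u - ?u\<^sub>0)) \<le> 0"
    using assms(4) power2_fnorm_diff_matrix_inv[OF assms(1), of w] by fastforce
  then show ?thesis
    using spd_matrix_inv[OF assms(1)] unfolding spd_def by (meson eq_iff_diff_eq_0 not_less)
qed

lemma matrix_inv_mult_in_colspace_iff: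
  fixes F :: "real^'n^'n" and G :: "real^'m^'n"
  assumes "invertible F"
  shows "matrix_inv F *v u \<in> colspace G \<longleftrightarrow> u \<in> colspace (F ** G)"
  unfolding colspace_def
proof
  assume "matrix_inv F *v u \<in> range ((*v) G)"
  then obtain a where "matrix_inv F *v u = G *v a" by blast
  then have "u = (F ** G) *v a"
    using matrix_inv_cancel(1)[OF assms, of u] by (simp add: matrix_vector_mul_assoc)
  then show "u \<in> range ((*v) (F ** G))" by blast
next
  assume "u \<in> range ((*v) (F ** G))"
  then obtain a where "u = (F ** G) *v a" by blast
  then have "matrix_inv F *v u = G *v a"
    using matrix_inv_cancel(2)[OF assms] by (simp flip: matrix_vector_mul_assoc)
  then show "matrix_inv F *v u \<in> range ((*v) G)" by blast
qed

lemma scaleR_eq_normalized_if_fnorm_eq: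
  assumes "c > 0" and "\<eta> > 0" and "fnorm F (c *\<^sub>R x) = \<eta>"
  shows "c *\<^sub>R x = (\<eta> / fnorm F x) *\<^sub>R x"
proof -
  have "c * fnorm F x = \<eta>"
    using assms by (simp add: fnorm_scaleR)
  then have "c = \<eta> / fnorm F x"
    using assms by (auto simp: field_simps)
  then show ?thesis by simp
qed

theorem theorem3:
  fixes Fnew Fold :: "real^'p^'p" and g ustar vstar :: "real^'p"
    and G :: "real^'m^'p" and \<eta> c :: real
  assumes "CARD('m) \<le> CARD('p)"
    and "\<eta> > 0"
    and "spd Fnew" and "spd Fold"
    and "rank G = CARD('m)"
    and "matrix_inv Fold *v ustar \<in> colspace G"
    and "\<forall>u. matrix_inv Fold *v u \<in> colspace G \<longrightarrow>
           (fnorm Fnew (g - matrix_inv Fnew *v ustar))\<^sup>2 \<le> (fnorm Fnew (g - matrix_inv Fnew *v u))\<^sup>2"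
    and "c > 0"
    and "vstar = c *\<^sub>R (matrix_inv Fnew *v (g - ustar))"
    and "fnorm Fnew vstar = \<eta>"
  shows "let P = mat 1 - Fold ** G **
                   matrix_inv (transpose G ** Fold ** matrix_inv Fnew ** Fold ** G) **
                   transpose G ** Fold
         in vstar = (\<eta> / sqrt (g \<bullet> (transpose P ** matrix_inv Fnew ** P *v g)))
                      *\<^sub>R (matrix_inv Fnew ** P *v g)"
proof -
  let ?Ni = "matrix_inv Fnew" and ?B = "Fold ** G"
  define P where "P = mat 1 - Fold ** G **
                   matrix_inv (transpose G ** Fold ** matrix_inv Fnew ** Fold ** G) **
                   transpose G ** Fold"
  have "invertible Fold"
    using assms(4) spd_invertible by blast
  have transpose_B: "transpose ?B = transpose G ** Fold"
    using assms(4) by (simp add: spd_def matrix_transpose_mul)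
  have "(*v) ?B = (*v) Fold \<circ> (*v) G"
    by (auto simp: matrix_vector_mul_assoc)
  moreover have "inj ((*v) G)"
    using full_rank_injective assms(5) by blast
  ultimately have "inj ((*v) ?B)"
    using inj_matrix_vector_mult[OF \<open>invertible Fold\<close>] by (simp add: inj_compose)
  then have "ustar = ?B *v (matrix_inv (transpose ?B ** ?Ni ** ?B) *v (transpose ?B *v g))"
    using assms(3,6,7) constrained_residual_minimizer
      matrix_inv_mult_in_colspace_iff[OF \<open>invertible Fold\<close>] by blast
  then have "P *v g = g - ustar"
    by (simp add: P_def transpose_B matrix_vector_mult_diff_rdistrib matrix_vector_mul_assoc
        matrix_mul_assoc)
  then have "vstar = c *\<^sub>R (?Ni *v (P *v g))"
    using assms(9) by simp
  then have "vstar = (\<eta> / fnorm Fnew (?Ni *v (P *v g))) *\<^sub>R (?Ni *v (P *v g))"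
    using scaleR_eq_normalized_if_fnorm_eq assms(2,8,10) by metis
  moreover have "fnorm Fnew (?Ni *v (P *v g)) = sqrt (g \<bullet> (transpose P ** ?Ni ** P *v g))"
    using spd_invertible[OF assms(3)]
    by (simp add: fnorm_matrix_inv inner_matrix_vector_transpose flip: matrix_vector_mul_assoc)
  ultimately show ?thesis
    unfolding Let_def P_def[symmetric] by (simp add: matrix_vector_mul_assoc)
qed

end
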